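(* Let $\epsilon\in(0,1]$ be close to $0$, let $r=\Theta(\log n)$, and let $d$ be an integer with $d\geq 6\epsilon^{-2} r\log n$ and $d=\Theta(\epsilon^{-2}r\log n)$. Let $Q\in\mathbb{R}^{n\times d}$ be a random matrix whose entries are independent and uniformly distributed on $\{+\sqrt{r/d},-\sqrt{r/d}\}$, and let $M=\sigma(QQ^\top)$, where $\sigma$ is the entrywise exponential function. Then, with probability at least $1-n^{-1}$, any sparse estimator or low-rank estimator of $M$ needs $\Omega(n^2)$ parameters to achieve Frobenius error $O(n)$, while, with probability at least $1-n^{-1}$, there is a sparse + low-rank estimator of $M$ with $O(n)$ parameters achieving Frobenius error $O(n)$.
   Context: Asymptotic notation is with respect to $n\to\infty$. A sparse estimator is a matrix with few nonzero entries (parameters = number of nonzeros); a low-rank estimator of rank $r'$ has $\Theta(n r')$ parameters; a sparse + low-rank estimator is a sum $S+R$ of such matrices, with parameters counted additively. Error is measured as $\|M-\widehat M\|_F$. *)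

theory Defs
  imports "HOL-Probability.Probability"
begin

text \<open>Matrices are functions nat => nat => real, only indices below n matter.
  The random sign pattern s assigns to each (i,k) with i<n, k<d a value in {-1,1};
  the uniform distribution on all such patterns is the product of independent
  uniform signs.\<close>

definition sign_mats :: "nat \<Rightarrow> nat \<Rightarrow> (nat \<times> nat \<Rightarrow> real) set" where
  "sign_mats n d = PiE ({..<n} \<times> {..<d}) (\<lambda>_. {-1, 1})"

definition sign_pmf :: "nat \<Rightarrow> nat \<Rightarrow> (nat \<times> nat \<Rightarrow> real) pmf" where
  "sign_pmf n d = pmf_of_set (sign_mats n d)"

definition rand_Q :: "nat \<Rightarrow> real \<Rightarrow> (nat \<times> nat \<Rightarrow> real) \<Rightarrow> nat \<Rightarrow> nat \<Rightarrow> real" where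
  "rand_Q d r s i k = sqrt (r / real d) * s (i, k)"

definition kernel_M :: "nat \<Rightarrow> real \<Rightarrow> (nat \<times> nat \<Rightarrow> real) \<Rightarrow> nat \<Rightarrow> nat \<Rightarrow> real" where
  "kernel_M d r s i j = exp (\<Sum>k<d. rand_Q d r s i k * rand_Q d r s j k)"

definition frob_err :: "nat \<Rightarrow> (nat \<Rightarrow> nat \<Rightarrow> real) \<Rightarrow> (nat \<Rightarrow> nat \<Rightarrow> real) \<Rightarrow> real" where
  "frob_err n A B = sqrt (\<Sum>i<n. \<Sum>j<n. (A i j - B i j)^2)"

text \<open>Number of parameters of a sparse estimator: its number of nonzero entries.\<close>
definition nnz :: "nat \<Rightarrow> (nat \<Rightarrow> nat \<Rightarrow> real) \<Rightarrow> nat" where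
  "nnz n S = card {(i, j). i < n \<and> j < n \<and> S i j \<noteq> 0}"

definition mat_rank :: "nat \<Rightarrow> (nat \<Rightarrow> nat \<Rightarrow> real) \<Rightarrow> nat" where
  "mat_rank n R = (LEAST k. \<exists>U V. \<forall>i<n. \<forall>j<n. R i j = (\<Sum>l<k. U i l * V j l))"

text \<open>Parameters of a low-rank estimator of rank r': n * r' (= Theta(n r')).\<close>
definition lowrank_params :: "nat \<Rightarrow> (nat \<Rightarrow> nat \<Rightarrow> real) \<Rightarrow> nat" where
  "lowrank_params n R = n * mat_rank n R"

end

(*
  With a = r / d the kernel is M i j = exp (a * <s_i, s_j>) for a uniformly random n x d sign
  matrix s, so M i i = exp r >= n^3 when r >= 3 ln n, while a^2 d = O(1) because d >= 6 r ln n.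
  Everything is controlled by the energy E = sum over i ~= j of (2 sinh (a <s_i, s_j>))^2, i.e. of
  (M i j - 1 / M i j)^2. Its mean is (n^2 - n) (2 cosh (2a)^d - 2) = O(n^2), and its variance is
  O(n^3) because terms indexed by disjoint pairs are independent; by Chebyshev, E = O(n^2) with
  probability at least 1 - 1/n. On this event:
  - diag M - I plus the all-ones matrix is an O(n)-approximation with 2n parameters, since its
    squared error is the sum of (M i j - 1)^2 over i ~= j, which is at most E;
  - every O(n)-approximation of M is strictly diagonally dominant, hence has rank n;
  - the exponents sum to a nonnegative number (a Gram matrix) and their squares sum to at most E/4,
    so a constant fraction of the off-diagonal exponents is >= -1; every such entry that a sparse
    estimator sets to 0 costs exp (-2) in squared error, so Omega(n^2) nonzeros are needed.
*)
theory Submission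
  imports Defs "HOL-Real_Asymp.Real_Asymp"
begin

section \<open>Hyperbolic inequalities\<close>

lemma sinh_sq_eq_exp: "(2 * sinh x)\<^sup>2 = exp (2 * x) + exp (- (2 * x)) - (2::real)"
  by (simp add: sinh_field_def power2_eq_square field_simps flip: exp_add)

lemma sq_le_sinh_sq: "x\<^sup>2 \<le> (sinh x)\<^sup>2" for x :: real
proof -
  have "\<bar>x\<bar> \<le> \<bar>sinh x\<bar>" using real_le_abs_sinh[of x] by (simp add: sinh_field_def exp_minus)
  from power_mono[OF this, of 2] show ?thesis by (simp only: power2_abs)
qed

lemma exp_minus_one_sq_le_sinh_sq: "(exp x - 1)\<^sup>2 \<le> (2 * sinh x)\<^sup>2" for x :: real
proof -
  have "\<bar>exp x - 1\<bar> \<le> \<bar>2 * sinh x\<bar>"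
  proof (cases "x \<ge> 0")
    case True
    then have "1 \<le> exp x" "exp (- x) \<le> 1" by auto
    then show ?thesis by (simp add: sinh_field_def)
  next
    case False
    then have "exp x \<le> 1" "1 \<le> exp (- x)" by auto
    then show ?thesis by (simp add: sinh_field_def)
  qed
  from power_mono[OF this, of 2] show ?thesis by (simp only: power2_abs)
qed

lemma sinh_pow4_le_exp: "(2 * sinh x) ^ 4 \<le> exp (4 * x) + exp (- (4 * x)) + (2::real)"
proof -
  have "(2 * sinh x)\<^sup>2 \<le> exp (2 * x) + exp (- (2 * x))"
    unfolding sinh_sq_eq_exp by simp
  then have "((2 * sinh x)\<^sup>2)\<^sup>2 \<le> (exp (2 * x) + exp (- (2 * x)))\<^sup>2"
    by (intro power_mono) auto
  also have "\<dots> = exp (4 * x) + exp (- (4 * x)) + 2"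
    by (simp add: power2_eq_square algebra_simps flip: exp_add)
  finally show ?thesis by simp
qed

lemma cosh_le_one_plus_sq:
  fixes c :: real
  assumes "\<bar>c\<bar> \<le> 1"
  shows "cosh c \<le> 1 + c\<^sup>2"
proof -
  define y where "y = \<bar>c\<bar>"
  have y: "0 \<le> y" "y \<le> 1" using assms by (auto simp: y_def)
  have "exp (- y) \<le> 1 / (1 + y)"
    using exp_ge_add_one_self[of y] y by (simp add: exp_minus field_simps)
  also have "\<dots> \<le> 1 - y + y\<^sup>2"
    using y by (simp add: field_simps power2_eq_square)
  finally have "exp y + exp (- y) \<le> 2 + 2 * y\<^sup>2"
    using exp_bound[OF y] by simp
  moreover have "cosh c = cosh y" by (simp add: y_def)
  ultimately show ?thesis by (simp add: cosh_field_def y_def)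
qed

lemma cosh_power_le_exp:
  fixes c :: real
  assumes "\<bar>c\<bar> \<le> 1"
  shows "cosh c ^ d \<le> exp (c\<^sup>2 * real d)"
proof -
  have "cosh c ^ d \<le> (1 + c\<^sup>2) ^ d"
    using cosh_le_one_plus_sq[OF assms] by (intro power_mono) auto
  also have "\<dots> \<le> exp (c\<^sup>2) ^ d"
    by (intro power_mono) (auto simp: exp_ge_add_one_self add.commute)
  finally show ?thesis by (simp add: exp_of_nat2_mult)
qed

section \<open>Rank of diagonally dominant matrices\<close>

lemma homogeneous_system_nontrivial_solution:
  fixes c :: "'a \<Rightarrow> nat \<Rightarrow> real"
  assumes "finite J" "k < card J"
  shows "\<exists>w. (\<exists>j\<in>J. w j \<noteq> 0) \<and> (\<forall>l<k. (\<Sum>j\<in>J. w j * c j l) = 0)"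
  using assms
proof (induction k arbitrary: J c)
  case 0
  then obtain j where "j \<in> J" by fastforce
  then show ?case by (intro exI[of _ "\<lambda>_. 1"]) auto
next
  case (Suc k)
  show ?case
  proof (cases "\<forall>j\<in>J. c j k = 0")
    case True
    with Suc.IH[of J c] Suc.prems show ?thesis by (auto simp: less_Suc_eq)
  next
    case False
    then obtain j0 where j0: "j0 \<in> J" "c j0 k \<noteq> 0" by blast
    define c' where "c' j l = c j0 k * c j l - c j k * c j0 l" for j l
    have "finite (J - {j0})" "k < card (J - {j0})" using Suc.prems j0 by auto
    then obtain \<mu> where
      \<mu>: "\<exists>j\<in>J - {j0}. \<mu> j \<noteq> 0" "\<forall>l<k. (\<Sum>j\<in>J - {j0}. \<mu> j * c' j l) = 0"
      using Suc.IH by blast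
    \<comment> \<open>Gaussian elimination of the unknown \<open>j0\<close> using equation \<open>k\<close>.\<close>
    define w where "w j = (if j = j0 then - (\<Sum>i\<in>J - {j0}. \<mu> i * c i k) else c j0 k * \<mu> j)" for j
    have "(\<Sum>j\<in>J. w j * c j l) = (\<Sum>j\<in>J - {j0}. \<mu> j * c' j l)" for l
    proof -
      have "(\<Sum>j\<in>J. w j * c j l) = w j0 * c j0 l + (\<Sum>j\<in>J - {j0}. w j * c j l)"
        using Suc.prems(1) j0(1) by (rule sum.remove)
      also have "\<dots> = (\<Sum>j\<in>J - {j0}. c j0 k * \<mu> j * c j l - \<mu> j * c j k * c j0 l)"
        by (simp add: w_def sum_subtractf sum_distrib_right)
      finally show ?thesis by (simp add: c'_def algebra_simps)
    qed
    moreover have "c' j k = 0" for j by (simp add: c'_def)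
    ultimately have "\<forall>l<Suc k. (\<Sum>j\<in>J. w j * c j l) = 0"
      using \<mu>(2) by (auto simp: less_Suc_eq)
    moreover have "\<exists>j\<in>J. w j \<noteq> 0"
      using \<mu>(1) j0(2) by (auto simp: w_def)
    ultimately show ?thesis by blast
  qed
qed

lemma factorization_dim_ge_if_diagonally_dominant:
  fixes R U V :: "nat \<Rightarrow> nat \<Rightarrow> real"
  assumes dominant: "\<forall>i<n. (\<Sum>j\<in>{..<n} - {i}. \<bar>R i j\<bar>) < \<bar>R i i\<bar>"
    and factor: "\<forall>i<n. \<forall>j<n. R i j = (\<Sum>l<k. U i l * V j l)"
  shows "n \<le> k"
proof (rule ccontr)
  assume "\<not> n \<le> k"
  then obtain w where w: "\<exists>j<n. w j \<noteq> 0" "\<forall>l<k. (\<Sum>j<n. w j * V j l) = 0"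
    using homogeneous_system_nontrivial_solution[of "{..<n}" k V] by auto
  have kernel: "(\<Sum>j<n. R i j * w j) = 0" if "i < n" for i
  proof -
    have "(\<Sum>j<n. R i j * w j) = (\<Sum>j<n. \<Sum>l<k. U i l * (w j * V j l))"
      using factor that by (simp add: sum_distrib_left mult_ac)
    also have "\<dots> = (\<Sum>l<k. U i l * (\<Sum>j<n. w j * V j l))"
      by (simp add: sum.swap[of _ "{..<n}"] sum_distrib_left)
    finally show ?thesis using w(2) by simp
  qed
  \<comment> \<open>The equation of a row where \<open>\<bar>w\<bar>\<close> is maximal contradicts dominance.\<close>
  define m where "m = Max ((\<lambda>j. \<bar>w j\<bar>) ` {..<n})"
  have le_m: "\<bar>w j\<bar> \<le> m" if "j < n" for j
    unfolding m_def using that by (intro Max_ge) auto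
  obtain i where i: "i < n" "\<bar>w i\<bar> = m"
    using Max_in[of "(\<lambda>j. \<bar>w j\<bar>) ` {..<n}"] w(1) unfolding m_def by fastforce
  have "0 < m" using w(1) le_m by force
  have "R i i * w i + (\<Sum>j\<in>{..<n} - {i}. R i j * w j) = 0"
    using kernel[OF i(1)] i(1) by (simp add: sum.remove[of "{..<n}" i])
  then have "\<bar>R i i\<bar> * m = \<bar>\<Sum>j\<in>{..<n} - {i}. R i j * w j\<bar>"
    using i(2) by (simp add: add_eq_0_iff abs_mult)
  also have "\<dots> \<le> (\<Sum>j\<in>{..<n} - {i}. \<bar>R i j\<bar> * m)"
    by (rule order_trans[OF sum_abs]) (auto simp: abs_mult intro!: sum_mono mult_left_mono le_m)
  also have "\<dots> < \<bar>R i i\<bar> * m"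
    using dominant i(1) \<open>0 < m\<close> by (simp add: sum_distrib_right[symmetric])
  finally show False by simp
qed

lemma mat_rank_ge_if_diagonally_dominant:
  assumes "\<forall>i<n. (\<Sum>j\<in>{..<n} - {i}. \<bar>R i j\<bar>) < \<bar>R i i\<bar>"
  shows "n \<le> mat_rank n R"
proof -
  let ?factors = "\<lambda>k. \<exists>U V. \<forall>i<n. \<forall>j<n. R i j = (\<Sum>l<k. U i l * V j l)"
  have "?factors n"
    by (intro exI[of _ R] exI[of _ "\<lambda>j l. if j = l then 1 else 0"]) (simp add: if_distrib cong: if_cong)
  then have "?factors (mat_rank n R)"
    unfolding mat_rank_def by (rule LeastI)
  with assms show ?thesis
    using factorization_dim_ge_if_diagonally_dominant by blast
qed

lemma mat_rank_outer_product_le_1: "mat_rank n (\<lambda>i j. u i * v j) \<le> 1"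
  unfolding mat_rank_def
  by (rule Least_le) (intro exI[of _ "\<lambda>i _. u i"] exI[of _ "\<lambda>j _. v j"], simp)

section \<open>Random sign matrices\<close>

lemma sum_PiE_mult_indep:
  fixes F G :: "('a \<Rightarrow> 'b) \<Rightarrow> real"
  assumes finI: "finite I" and finB: "\<And>p. p \<in> I \<Longrightarrow> finite (B p)" and AI: "A \<subseteq> I"
    and F: "\<And>s s'. (\<forall>p\<in>A. s p = s' p) \<Longrightarrow> F s = F s'"
    and G: "\<And>s s'. (\<forall>p\<in>I - A. s p = s' p) \<Longrightarrow> G s = G s'"
  shows "real (card (PiE I B)) * (\<Sum>s\<in>PiE I B. F s * G s) = (\<Sum>s\<in>PiE I B. F s) * (\<Sum>s\<in>PiE I B. G s)"
proof -
  define OA where "OA = PiE A B"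
  define OC where "OC = PiE (I - A) B"
  define merge where "merge = (\<lambda>(u :: 'a \<Rightarrow> 'b, w). (\<lambda>p. if p \<in> A then u p else w p))"
  have bij: "bij_betw merge (OA \<times> OC) (PiE I B)"
  proof (rule bij_betw_byWitness[where f' = "\<lambda>s. (restrict s A, restrict s (I - A))"])
    show "\<forall>a\<in>OA \<times> OC. (\<lambda>s. (restrict s A, restrict s (I - A))) (merge a) = a"
      by (auto simp: merge_def OA_def OC_def restrict_def PiE_iff extensional_def fun_eq_iff)
    show "\<forall>s\<in>PiE I B. merge (restrict s A, restrict s (I - A)) = s"
      using AI by (auto simp: merge_def restrict_def PiE_iff extensional_def fun_eq_iff)
    show "merge ` (OA \<times> OC) \<subseteq> PiE I B"
      using AI by (auto simp: merge_def OA_def OC_def PiE_iff extensional_def)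
    show "(\<lambda>s. (restrict s A, restrict s (I - A))) ` PiE I B \<subseteq> OA \<times> OC"
      using AI by (auto simp: OA_def OC_def PiE_iff)
  qed
  define f where "f u = F (merge (u, \<lambda>_. undefined))" for u
  define g where "g w = G (merge (\<lambda>_. undefined, w))" for w
  have F_merge: "F (merge (u, w)) = f u" for u w unfolding f_def by (rule F) (auto simp: merge_def)
  have G_merge: "G (merge (u, w)) = g w" for u w unfolding g_def by (rule G) (auto simp: merge_def)
  have sum_eq: "(\<Sum>s\<in>PiE I B. H s) = (\<Sum>u\<in>OA. \<Sum>w\<in>OC. H (merge (u, w)))" for H :: "('a \<Rightarrow> 'b) \<Rightarrow> real"
    by (simp add: sum.reindex_bij_betw[OF bij, symmetric] sum.cartesian_product)
  have card_eq: "card (PiE I B) = card OA * card OC"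
    using bij_betw_same_card[OF bij] by (simp add: card_cartesian_product)
  have "(\<Sum>s\<in>PiE I B. F s * G s) = (\<Sum>u\<in>OA. f u) * (\<Sum>w\<in>OC. g w)"
    unfolding sum_eq F_merge G_merge by (simp add: sum_product)
  moreover have "(\<Sum>s\<in>PiE I B. F s) = real (card OC) * (\<Sum>u\<in>OA. f u)"
    unfolding sum_eq F_merge by (simp add: sum_distrib_left)
  moreover have "(\<Sum>s\<in>PiE I B. G s) = real (card OA) * (\<Sum>w\<in>OC. g w)"
    unfolding sum_eq G_merge by simp
  ultimately show ?thesis unfolding card_eq by (simp add: algebra_simps)
qed

lemma finite_sign_mats: "finite (sign_mats n d)"
  unfolding sign_mats_def by (intro finite_PiE) auto

lemma sign_mats_nonempty: "sign_mats n d \<noteq> {}"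
  unfolding sign_mats_def by (simp add: PiE_eq_empty_iff)

lemma card_sign_mats: "card (sign_mats n d) = 2 ^ (n * d)"
  unfolding sign_mats_def by (simp add: card_PiE card_cartesian_product numeral_2_eq_2)

lemma sign_mats_entry: "s \<in> sign_mats n d \<Longrightarrow> i < n \<Longrightarrow> t < d \<Longrightarrow> s (i, t) = -1 \<or> s (i, t) = 1"
  unfolding sign_mats_def by (auto simp: PiE_iff)

lemma sign_mats_entry_sq: "s \<in> sign_mats n d \<Longrightarrow> i < n \<Longrightarrow> t < d \<Longrightarrow> s (i, t) * s (i, t) = 1"
  using sign_mats_entry[of s n d i t] by auto

lemma sign_mats_undefined: "s \<in> sign_mats n d \<Longrightarrow> p \<notin> {..<n} \<times> {..<d} \<Longrightarrow> s p = undefined"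
  unfolding sign_mats_def by (cases p) (auto simp: PiE_iff extensional_def)

lemma sum_sign_mats_prod_row:
  fixes g :: "real \<Rightarrow> real"
  assumes j: "j < n"
  shows "(\<Sum>s\<in>sign_mats n d. \<Prod>t<d. g (s (j, t))) = real (card (sign_mats n d)) * ((g (-1) + g 1) / 2) ^ d"
proof -
  define I where "I = {..<n} \<times> {..<d}"
  define f where "f p y = (if fst p = j then g y else 1) / 2" for p :: "nat \<times> nat" and y
  have finI: "finite I" unfolding I_def by simp
  have row: "{p\<in>I. fst p = j} = (\<lambda>t. (j, t)) ` {..<d}" unfolding I_def using j by auto
  have prod_f: "(\<Prod>p\<in>I. f p (s p)) = (\<Prod>t<d. g (s (j, t))) / 2 ^ (n * d)" for s
  proof -
    have "(\<Prod>p\<in>I. f p (s p)) = (\<Prod>p\<in>I. if fst p = j then g (s p) else 1) / (\<Prod>p\<in>I. 2)"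
      unfolding f_def by (rule prod_dividef)
    also have "(\<Prod>p\<in>I. if fst p = j then g (s p) else 1) = (\<Prod>p\<in>{p\<in>I. fst p = j}. g (s p))"
      by (rule prod.inter_filter[OF finI, symmetric])
    also have "\<dots> = (\<Prod>t<d. g (s (j, t)))" unfolding row by (simp add: prod.reindex inj_on_def)
    finally show ?thesis by (simp add: I_def card_cartesian_product)
  qed
  have "(\<Sum>s\<in>sign_mats n d. \<Prod>t<d. g (s (j, t))) / 2 ^ (n * d) = (\<Sum>s\<in>sign_mats n d. \<Prod>p\<in>I. f p (s p))"
    by (simp add: prod_f sum_divide_distrib)
  also have "\<dots> = (\<Prod>p\<in>I. \<Sum>y\<in>{-1, 1}. f p y)"
    unfolding sign_mats_def I_def by (rule prod_sum_PiE[symmetric]) auto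
  also have "\<dots> = (\<Prod>p\<in>I. if fst p = j then (g (-1) + g 1) / 2 else 1)"
    by (rule prod.cong) (auto simp: f_def add_divide_distrib)
  also have "\<dots> = (\<Prod>p\<in>{p\<in>I. fst p = j}. (g (-1) + g 1) / 2)"
    by (rule prod.inter_filter[OF finI, symmetric])
  also have "\<dots> = ((g (-1) + g 1) / 2) ^ d"
    by (simp add: row card_image inj_on_def)
  finally show ?thesis by (simp add: card_sign_mats field_simps)
qed

definition row_inner :: "nat \<Rightarrow> (nat \<times> nat \<Rightarrow> real) \<Rightarrow> nat \<Rightarrow> nat \<Rightarrow> real" where
  "row_inner d s i j = (\<Sum>t<d. s (i, t) * s (j, t))"

lemma row_inner_self: "s \<in> sign_mats n d \<Longrightarrow> i < n \<Longrightarrow> row_inner d s i i = real d"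
  unfolding row_inner_def using sign_mats_entry_sq[of s n d i] by simp

lemma sum_row_inner_nonneg: "0 \<le> (\<Sum>i<n. \<Sum>j<n. row_inner d s i j)"
proof -
  have "(\<Sum>i<n. \<Sum>j<n. row_inner d s i j) = (\<Sum>t<d. (\<Sum>i<n. s (i, t))\<^sup>2)"
    unfolding row_inner_def power2_eq_square sum_product
    by (simp add: sum.swap[of _ "{..<n}" "{..<d}"])
  then show ?thesis by (simp add: sum_nonneg)
qed

text \<open>Multiplying row \<open>j\<close> entrywise by row \<open>i\<close> is a measure-preserving involution of the sign
  matrices which turns the inner product of rows \<open>i\<close> and \<open>j\<close> into the sum of the independent
  signs in row \<open>j\<close>.\<close>

definition flip_row :: "nat \<Rightarrow> nat \<Rightarrow> nat \<Rightarrow> (nat \<times> nat \<Rightarrow> real) \<Rightarrow> (nat \<times> nat \<Rightarrow> real)" where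
  "flip_row d i j s = (\<lambda>(k, t). if k = j \<and> t < d then s (i, t) * s (k, t) else s (k, t))"

lemma flip_row_in_sign_mats:
  assumes s: "s \<in> sign_mats n d" and "i < n" "j < n"
  shows "flip_row d i j s \<in> sign_mats n d"
proof -
  have "flip_row d i j s (k, t) \<in> {-1, 1}" if "k < n" "t < d" for k t
    using sign_mats_entry[OF s \<open>i < n\<close> \<open>t < d\<close>] sign_mats_entry[OF s that] by (auto simp: flip_row_def)
  moreover have "flip_row d i j s p = undefined" if "p \<notin> {..<n} \<times> {..<d}" for p
    using that sign_mats_undefined[OF s that] \<open>j < n\<close> by (auto simp: flip_row_def split: prod.splits)
  ultimately show ?thesis
    unfolding sign_mats_def PiE_iff extensional_def by auto
qed

lemma flip_row_involutive:
  assumes s: "s \<in> sign_mats n d" and "i < n" "i \<noteq> j"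
  shows "flip_row d i j (flip_row d i j s) = s"
  using sign_mats_entry_sq[OF s \<open>i < n\<close>] \<open>i \<noteq> j\<close>
  by (auto simp: flip_row_def fun_eq_iff mult.assoc[symmetric])

lemma bij_betw_flip_row:
  assumes "i < n" "j < n" "i \<noteq> j"
  shows "bij_betw (flip_row d i j) (sign_mats n d) (sign_mats n d)"
  by (rule bij_betw_byWitness[where f' = "flip_row d i j"])
     (use assms flip_row_involutive flip_row_in_sign_mats in auto)

lemma row_inner_flip_row:
  assumes s: "s \<in> sign_mats n d" and "i < n" "i \<noteq> j"
  shows "row_inner d (flip_row d i j s) i j = (\<Sum>t<d. s (j, t))"
  unfolding row_inner_def
  using sign_mats_entry_sq[OF s \<open>i < n\<close>] \<open>i \<noteq> j\<close> by (intro sum.cong) (auto simp: flip_row_def mult.assoc[symmetric])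

lemma sum_sign_mats_exp_row_inner:
  assumes ij: "i < n" "j < n" "i \<noteq> j"
  shows "(\<Sum>s\<in>sign_mats n d. exp (c * row_inner d s i j)) = real (card (sign_mats n d)) * cosh c ^ d"
proof -
  have "(\<Sum>s\<in>sign_mats n d. exp (c * row_inner d s i j)) =
        (\<Sum>s\<in>sign_mats n d. exp (c * row_inner d (flip_row d i j s) i j))"
    by (rule sum.reindex_bij_betw[OF bij_betw_flip_row[OF ij], symmetric])
  also have "\<dots> = (\<Sum>s\<in>sign_mats n d. \<Prod>t<d. exp (c * s (j, t)))"
    using ij by (intro sum.cong) (simp_all add: row_inner_flip_row sum_distrib_left exp_sum)
  also have "\<dots> = real (card (sign_mats n d)) * ((exp (c * -1) + exp (c * 1)) / 2) ^ d"
    by (rule sum_sign_mats_prod_row[OF ij(2)])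
  finally show ?thesis by (simp add: cosh_field_def add.commute)
qed

section \<open>Moments of the sinh energy\<close>

definition off_diag :: "nat \<Rightarrow> (nat \<times> nat) set" where
  "off_diag n = {p \<in> {..<n} \<times> {..<n}. fst p \<noteq> snd p}"

definition sinh_energy :: "nat \<Rightarrow> (nat \<Rightarrow> nat \<Rightarrow> real) \<Rightarrow> real" where
  "sinh_energy n x = (\<Sum>p\<in>off_diag n. (2 * sinh (x (fst p) (snd p)))\<^sup>2)"

lemma mem_off_diag_iff: "p \<in> off_diag n \<longleftrightarrow> fst p < n \<and> snd p < n \<and> fst p \<noteq> snd p"
  by (auto simp: off_diag_def mem_Times_iff)

lemma off_diag_subset: "off_diag n \<subseteq> {..<n} \<times> {..<n}"
  by (auto simp: off_diag_def)

lemma finite_off_diag: "finite (off_diag n)"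
  using off_diag_subset by (rule finite_subset) simp

lemma card_off_diag: "real (card (off_diag n)) = real n ^ 2 - real n"
proof -
  have "off_diag n = {..<n} \<times> {..<n} - (\<lambda>i. (i, i)) ` {..<n}"
    by (auto simp: off_diag_def)
  moreover have "card ((\<lambda>i. (i, i)) ` {..<n}) = n"
    by (simp add: card_image inj_on_def)
  ultimately have "card (off_diag n) = n * n - n"
    by (simp add: card_Diff_subset[of "(\<lambda>i. (i, i)) ` {..<n}"] image_subset_iff card_cartesian_product)
  moreover have "n \<le> n * n" by simp
  ultimately show ?thesis by (simp add: of_nat_diff power2_eq_square)
qed

lemma card_off_diag_le: "real (card (off_diag n)) \<le> real n ^ 2"
  by (simp add: card_off_diag)

lemma card_off_diag_overlapping:
  "card {q \<in> off_diag n. {fst q, snd q} \<inter> {i, j} \<noteq> {}} \<le> 4 * n"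
proof -
  have "{q \<in> off_diag n. {fst q, snd q} \<inter> {i, j} \<noteq> {}} \<subseteq> {i, j} \<times> {..<n} \<union> {..<n} \<times> {i, j}"
    by (auto simp: off_diag_def)
  then have "card {q \<in> off_diag n. {fst q, snd q} \<inter> {i, j} \<noteq> {}} \<le> card ({i, j} \<times> {..<n}) + card ({..<n} \<times> {i, j})"
    by (intro order_trans[OF card_mono card_Un_le]) auto
  also have "\<dots> = 2 * (card {i, j} * n)"
    by (simp add: card_cartesian_product)
  also have "\<dots> \<le> 2 * (2 * n)"
    using mult_le_mono1[of "card {i, j}" 2 n] by (simp add: card_insert_if)
  finally show ?thesis by simp
qed


lemma sum_sign_mats_sinh_sq:
  assumes ij: "i < n" "j < n" "i \<noteq> j"
  shows "(\<Sum>s\<in>sign_mats n d. (2 * sinh (a * row_inner d s i j))\<^sup>2) =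
    real (card (sign_mats n d)) * (2 * cosh (2 * a) ^ d - 2)"
proof -
  have "(\<Sum>s\<in>sign_mats n d. (2 * sinh (a * row_inner d s i j))\<^sup>2) =
    (\<Sum>s\<in>sign_mats n d. exp ((2 * a) * row_inner d s i j)) + (\<Sum>s\<in>sign_mats n d. exp ((- (2 * a)) * row_inner d s i j))
      - (\<Sum>s\<in>sign_mats n d. 2)"
    unfolding sinh_sq_eq_exp sum.distrib[symmetric] sum_subtractf[symmetric] by (simp add: mult.assoc)
  then show ?thesis
    unfolding sum_sign_mats_exp_row_inner[OF ij] by (simp add: algebra_simps)
qed

lemma sum_sign_mats_sinh_pow4:
  assumes ij: "i < n" "j < n" "i \<noteq> j"
  shows "(\<Sum>s\<in>sign_mats n d. (2 * sinh (a * row_inner d s i j)) ^ 4) \<le>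
    real (card (sign_mats n d)) * (2 * cosh (4 * a) ^ d + 2)"
proof -
  have "(\<Sum>s\<in>sign_mats n d. (2 * sinh (a * row_inner d s i j)) ^ 4) \<le>
    (\<Sum>s\<in>sign_mats n d. exp ((4 * a) * row_inner d s i j)) + (\<Sum>s\<in>sign_mats n d. exp ((- (4 * a)) * row_inner d s i j))
      + (\<Sum>s\<in>sign_mats n d. 2)"
    unfolding sum.distrib[symmetric] by (intro sum_mono order_trans[OF sinh_pow4_le_exp]) (simp add: mult.assoc)
  then show ?thesis
    unfolding sum_sign_mats_exp_row_inner[OF ij] by (simp add: algebra_simps)
qed

lemma sum_sign_mats_sinh_sq_mult_disjoint:
  assumes ij: "i < n" "j < n" "i \<noteq> j" and kl: "k < n" "l < n" "k \<noteq> l"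
    and disjoint: "{k, l} \<inter> {i, j} = {}"
  shows "(\<Sum>s\<in>sign_mats n d. (2 * sinh (a * row_inner d s i j))\<^sup>2 * (2 * sinh (a * row_inner d s k l))\<^sup>2) =
    real (card (sign_mats n d)) * (2 * cosh (2 * a) ^ d - 2)\<^sup>2"
proof -
  define I where "I = {..<n} \<times> {..<d}"
  define A where "A = {i, j} \<times> {..<d}"
  have "real (card (sign_mats n d)) * (\<Sum>s\<in>sign_mats n d. (2 * sinh (a * row_inner d s i j))\<^sup>2 * (2 * sinh (a * row_inner d s k l))\<^sup>2)
    = (\<Sum>s\<in>sign_mats n d. (2 * sinh (a * row_inner d s i j))\<^sup>2) * (\<Sum>s\<in>sign_mats n d. (2 * sinh (a * row_inner d s k l))\<^sup>2)"
    unfolding sign_mats_def I_def[symmetric]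
  proof (rule sum_PiE_mult_indep)
    show "finite I" "A \<subseteq> I" using ij by (auto simp: I_def A_def)
    fix s s' :: "nat \<times> nat \<Rightarrow> real"
    show "(2 * sinh (a * row_inner d s i j))\<^sup>2 = (2 * sinh (a * row_inner d s' i j))\<^sup>2" if "\<forall>p\<in>A. s p = s' p"
      using that unfolding row_inner_def A_def by (intro arg_cong[where f = "\<lambda>x. (2 * sinh (a * x))\<^sup>2"] sum.cong) auto
    show "(2 * sinh (a * row_inner d s k l))\<^sup>2 = (2 * sinh (a * row_inner d s' k l))\<^sup>2" if "\<forall>p\<in>I - A. s p = s' p"
      using that kl disjoint unfolding row_inner_def A_def I_def
      by (intro arg_cong[where f = "\<lambda>x. (2 * sinh (a * x))\<^sup>2"] sum.cong) auto
  qed auto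
  moreover have "real (card (sign_mats n d)) > 0"
    using finite_sign_mats sign_mats_nonempty by (simp add: card_gt_0_iff)
  ultimately show ?thesis
    unfolding sum_sign_mats_sinh_sq[OF ij] sum_sign_mats_sinh_sq[OF kl] by (simp add: power2_eq_square)
qed

lemma sum_sign_mats_sinh_sq_mult_le:
  assumes ij: "i < n" "j < n" "i \<noteq> j" and kl: "k < n" "l < n" "k \<noteq> l"
  shows "(\<Sum>s\<in>sign_mats n d. (2 * sinh (a * row_inner d s i j))\<^sup>2 * (2 * sinh (a * row_inner d s k l))\<^sup>2) \<le>
    real (card (sign_mats n d)) * (2 * cosh (4 * a) ^ d + 2)"
proof -
  have "(\<Sum>s\<in>sign_mats n d. (2 * sinh (a * row_inner d s i j))\<^sup>2 * (2 * sinh (a * row_inner d s k l))\<^sup>2) \<le>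
    (\<Sum>s\<in>sign_mats n d. ((2 * sinh (a * row_inner d s i j)) ^ 4 + (2 * sinh (a * row_inner d s k l)) ^ 4) / 2)"
  proof (rule sum_mono)
    fix s
    have "0 \<le> ((2 * sinh (a * row_inner d s i j))\<^sup>2 - (2 * sinh (a * row_inner d s k l))\<^sup>2)\<^sup>2" by simp
    then show "(2 * sinh (a * row_inner d s i j))\<^sup>2 * (2 * sinh (a * row_inner d s k l))\<^sup>2 \<le>
      ((2 * sinh (a * row_inner d s i j)) ^ 4 + (2 * sinh (a * row_inner d s k l)) ^ 4) / 2"
      by (simp add: power2_diff flip: power_mult)
  qed
  also have "\<dots> \<le> real (card (sign_mats n d)) * (2 * cosh (4 * a) ^ d + 2)"
    using sum_sign_mats_sinh_pow4[OF ij, where d = d and a = a] sum_sign_mats_sinh_pow4[OF kl, where d = d and a = a]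
    by (simp add: sum.distrib flip: sum_divide_distrib)
  finally show ?thesis .
qed

lemma sum_sign_mats_sinh_sq_mult_off_diag:
  assumes "p \<in> off_diag n" "q \<in> off_diag n"
  shows "(\<Sum>s\<in>sign_mats n d. (2 * sinh (a * row_inner d s (fst p) (snd p)))\<^sup>2 * (2 * sinh (a * row_inner d s (fst q) (snd q)))\<^sup>2)
    \<le> real (card (sign_mats n d)) * (2 * cosh (2 * a) ^ d - 2)\<^sup>2
      + (if {fst q, snd q} \<inter> {fst p, snd p} = {} then 0 else real (card (sign_mats n d)) * (2 * cosh (4 * a) ^ d + 2))"
proof (cases "{fst q, snd q} \<inter> {fst p, snd p} = {}")
  case True
  with assms show ?thesis
    using sum_sign_mats_sinh_sq_mult_disjoint[where i = "fst p" and j = "snd p" and k = "fst q" and l = "snd q"]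
    by (simp add: mem_off_diag_iff)
next
  case False
  with assms have "(\<Sum>s\<in>sign_mats n d. (2 * sinh (a * row_inner d s (fst p) (snd p)))\<^sup>2 * (2 * sinh (a * row_inner d s (fst q) (snd q)))\<^sup>2)
    \<le> real (card (sign_mats n d)) * (2 * cosh (4 * a) ^ d + 2)"
    using sum_sign_mats_sinh_sq_mult_le[where i = "fst p" and j = "snd p" and k = "fst q" and l = "snd q"]
    by (simp add: mem_off_diag_iff)
  moreover have "0 \<le> real (card (sign_mats n d)) * (2 * cosh (2 * a) ^ d - 2)\<^sup>2" by simp
  ultimately show ?thesis by (subst if_not_P[OF False]) linarith
qed

lemma sum_sign_mats_sinh_energy:
  "(\<Sum>s\<in>sign_mats n d. sinh_energy n (\<lambda>i j. a * row_inner d s i j)) =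
    real (card (sign_mats n d)) * (2 * cosh (2 * a) ^ d - 2) * real (card (off_diag n))"
proof -
  have "(\<Sum>s\<in>sign_mats n d. sinh_energy n (\<lambda>i j. a * row_inner d s i j)) =
    (\<Sum>p\<in>off_diag n. \<Sum>s\<in>sign_mats n d. (2 * sinh (a * row_inner d s (fst p) (snd p)))\<^sup>2)"
    unfolding sinh_energy_def by (rule sum.swap)
  also have "\<dots> = (\<Sum>p\<in>off_diag n. real (card (sign_mats n d)) * (2 * cosh (2 * a) ^ d - 2))"
    using sum_sign_mats_sinh_sq[where n = n and d = d and a = a] by (intro sum.cong refl) (auto simp: off_diag_def)
  finally show ?thesis by simp
qed

lemma sum_sign_mats_sinh_energy_sq:
  "(\<Sum>s\<in>sign_mats n d. (sinh_energy n (\<lambda>i j. a * row_inner d s i j))\<^sup>2) \<le>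
    real (card (sign_mats n d)) * ((2 * cosh (2 * a) ^ d - 2) * real (card (off_diag n)))\<^sup>2
    + real (card (sign_mats n d)) * (2 * cosh (4 * a) ^ d + 2) * (4 * real n ^ 3)"
proof -
  let ?N = "real (card (sign_mats n d))" and ?\<mu> = "2 * cosh (2 * a) ^ d - 2" and ?\<sigma> = "2 * cosh (4 * a) ^ d + 2"
  let ?Y = "\<lambda>p s. (2 * sinh (a * row_inner d s (fst p) (snd p)))\<^sup>2"
  have \<sigma>: "0 \<le> ?\<sigma>" by simp
  let ?extra = "\<lambda>p q. if {fst q, snd q} \<inter> {fst p, snd p} = {} then 0 else ?N * ?\<sigma>"
  have extra_sum: "(\<Sum>q\<in>off_diag n. ?extra p q) \<le> ?N * ?\<sigma> * (4 * real n)" for p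
  proof -
    have "(\<Sum>q\<in>off_diag n. ?extra p q) = ?N * ?\<sigma> * real (card {q \<in> off_diag n. {fst q, snd q} \<inter> {fst p, snd p} \<noteq> {}})"
      using finite_off_diag by (simp add: sum.If_cases Int_def conj_commute)
    also have "\<dots> \<le> ?N * ?\<sigma> * (4 * real n)"
      using card_off_diag_overlapping[of n "fst p" "snd p"] \<sigma> by (intro mult_left_mono) simp_all
    finally show ?thesis .
  qed
  have "(\<Sum>s\<in>sign_mats n d. (sinh_energy n (\<lambda>i j. a * row_inner d s i j))\<^sup>2) =
    (\<Sum>p\<in>off_diag n. \<Sum>q\<in>off_diag n. \<Sum>s\<in>sign_mats n d. ?Y p s * ?Y q s)"
    unfolding sinh_energy_def power2_eq_square[of "sum _ _"] sum_product
    by (subst sum.swap) (simp add: sum.swap[of _ "sign_mats n d"])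
  also have "\<dots> \<le> (\<Sum>p\<in>off_diag n. \<Sum>q\<in>off_diag n. ?N * ?\<mu>\<^sup>2 + ?extra p q)"
    by (intro sum_mono sum_sign_mats_sinh_sq_mult_off_diag)
  also have "\<dots> \<le> (\<Sum>p\<in>off_diag n. ?N * ?\<mu>\<^sup>2 * real (card (off_diag n)) + ?N * ?\<sigma> * (4 * real n))"
    using extra_sum by (intro sum_mono) (simp add: sum.distrib)
  also have "\<dots> = ?N * (?\<mu> * real (card (off_diag n)))\<^sup>2 + ?N * ?\<sigma> * (4 * real n * real (card (off_diag n)))"
    by (simp add: power2_eq_square algebra_simps)
  also have "\<dots> \<le> ?N * (?\<mu> * real (card (off_diag n)))\<^sup>2 + ?N * ?\<sigma> * (4 * real n ^ 3)"
    using mult_left_mono[OF card_off_diag_le, of "4 * real n" n] \<sigma>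
    by (intro add_left_mono mult_left_mono) (simp_all add: power2_eq_square power3_eq_cube)
  finally show ?thesis .
qed

lemma sum_sign_mats_sinh_energy_variance:
  "(\<Sum>s\<in>sign_mats n d. (sinh_energy n (\<lambda>i j. a * row_inner d s i j)
      - (2 * cosh (2 * a) ^ d - 2) * real (card (off_diag n)))\<^sup>2) \<le>
    real (card (sign_mats n d)) * (2 * cosh (4 * a) ^ d + 2) * (4 * real n ^ 3)"
proof -
  let ?E = "\<lambda>s. sinh_energy n (\<lambda>i j. a * row_inner d s i j)"
  let ?N = "real (card (sign_mats n d))" and ?m = "(2 * cosh (2 * a) ^ d - 2) * real (card (off_diag n))"
  have "(\<Sum>s\<in>sign_mats n d. (?E s - ?m)\<^sup>2) = (\<Sum>s\<in>sign_mats n d. (?E s)\<^sup>2) - 2 * ?m * (\<Sum>s\<in>sign_mats n d. ?E s) + ?N * ?m\<^sup>2"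
    by (simp add: power2_diff sum.distrib sum_subtractf sum_distrib_left mult_ac)
  also have "\<dots> = (\<Sum>s\<in>sign_mats n d. (?E s)\<^sup>2) - ?N * ?m\<^sup>2"
    by (simp add: sum_sign_mats_sinh_energy power2_eq_square)
  finally show ?thesis
    using sum_sign_mats_sinh_energy_sq[where n = n and d = d and a = a] by simp
qed

lemma chebyshev_count:
  fixes F :: "'a \<Rightarrow> real"
  assumes "finite S" "0 < t"
  shows "real (card {s\<in>S. m + t \<le> F s}) * t\<^sup>2 \<le> (\<Sum>s\<in>S. (F s - m)\<^sup>2)"
proof -
  have "real (card {s\<in>S. m + t \<le> F s}) * t\<^sup>2 = (\<Sum>s\<in>{s\<in>S. m + t \<le> F s}. t\<^sup>2)" by simp
  also have "\<dots> \<le> (\<Sum>s\<in>{s\<in>S. m + t \<le> F s}. (F s - m)\<^sup>2)"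
    using assms(2) by (intro sum_mono power_mono) auto
  also have "\<dots> \<le> (\<Sum>s\<in>S. (F s - m)\<^sup>2)"
    using assms(1) by (intro sum_mono2) auto
  finally show ?thesis .
qed

lemma card_sign_mats_sinh_energy_large:
  assumes T: "0 < T" "4 * (2 * cosh (4 * a) ^ d + 2) \<le> T\<^sup>2" and "0 < n"
  shows "real (card {s\<in>sign_mats n d. (2 * cosh (2 * a) ^ d - 2) * real (card (off_diag n)) + T * real n ^ 2
      \<le> sinh_energy n (\<lambda>i j. a * row_inner d s i j)}) \<le> real (card (sign_mats n d)) / real n"
    (is "real (card ?bad) \<le> ?N / _")
proof -
  have "real (card ?bad) * (T * real n ^ 2)\<^sup>2 \<le>
    (\<Sum>s\<in>sign_mats n d. (sinh_energy n (\<lambda>i j. a * row_inner d s i j) - (2 * cosh (2 * a) ^ d - 2) * real (card (off_diag n)))\<^sup>2)"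
    using T \<open>0 < n\<close> by (intro chebyshev_count finite_sign_mats) simp
  also have "\<dots> \<le> ?N * (2 * cosh (4 * a) ^ d + 2) * (4 * real n ^ 3)"
    by (rule sum_sign_mats_sinh_energy_variance)
  also have "\<dots> \<le> ?N * T\<^sup>2 * real n ^ 3"
    using mult_left_mono[OF mult_right_mono[OF T(2), of "real n ^ 3"], of ?N] by (simp add: algebra_simps)
  finally have "(real (card ?bad) * real n) * (T\<^sup>2 * real n ^ 3) \<le> ?N * (T\<^sup>2 * real n ^ 3)"
    by (simp add: power2_eq_square power3_eq_cube algebra_simps)
  then have "real (card ?bad) * real n \<le> ?N"
    using T \<open>0 < n\<close> by simp
  then show ?thesis
    using \<open>0 < n\<close> by (simp add: pos_le_divide_eq)
qed

section \<open>Entrywise exponentials of small sinh energy\<close>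

lemma sum_square_split_diag:
  "(\<Sum>i<n. \<Sum>j<n. f i j) = (\<Sum>p\<in>off_diag n. f (fst p) (snd p)) + (\<Sum>i<n. f i i)"
proof -
  have "{..<n} \<times> {..<n} \<inter> {p. fst p \<noteq> snd p} = off_diag n"
    and "{..<n} \<times> {..<n} - {p. fst p \<noteq> snd p} = (\<lambda>i. (i, i)) ` {..<n}"
    by (auto simp: off_diag_def)
  then have "(\<Sum>p\<in>{..<n} \<times> {..<n}. f (fst p) (snd p)) = (\<Sum>p\<in>off_diag n. f (fst p) (snd p)) + (\<Sum>i<n. f i i)"
    using sum.Int_Diff[of "{..<n} \<times> {..<n}" "\<lambda>p. f (fst p) (snd p)" "{p. fst p \<noteq> snd p}"] by (simp add: sum.reindex inj_on_def)
  then show ?thesis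
    by (simp add: sum.cartesian_product split_def)
qed

lemma sum_off_diag_ge:
  assumes "\<forall>i<n. x i i = r" and "0 \<le> (\<Sum>i<n. \<Sum>j<n. x i j)"
  shows "- (real n * r) \<le> (\<Sum>p\<in>off_diag n. x (fst p) (snd p))"
  using assms sum_square_split_diag[of x n] by simp

lemma sum_add_card_le_card_ge_neg_one:
  fixes x :: "'a \<Rightarrow> real"
  assumes "finite P" "0 < K"
  shows "(\<Sum>p\<in>P. x p) + real (card P) \<le> (\<Sum>p\<in>P. (x p)\<^sup>2) / (4 * K) + (K + 1) * real (card {p\<in>P. -1 \<le> x p})"
proof -
  have "x p + 1 \<le> (x p)\<^sup>2 / (4 * K) + (K + 1) * of_bool (-1 \<le> x p)" for p
  proof (cases "-1 \<le> x p")
    case True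
    \<comment> \<open>AM-GM: \<open>x \<le> x\<^sup>2 / (4 K) + K\<close>\<close>
    have "0 \<le> (x p - 2 * K)\<^sup>2 / (4 * K)" using \<open>0 < K\<close> by simp
    then show ?thesis using True \<open>0 < K\<close> by (simp add: power2_diff field_simps power2_eq_square)
  next
    case False
    have "0 \<le> (x p)\<^sup>2 / (4 * K)" using \<open>0 < K\<close> by simp
    with False show ?thesis by simp
  qed
  then have "(\<Sum>p\<in>P. x p + 1) \<le> (\<Sum>p\<in>P. (x p)\<^sup>2 / (4 * K) + (K + 1) * of_bool (-1 \<le> x p))"
    by (rule sum_mono)
  then show ?thesis
    using \<open>finite P\<close> by (simp add: sum.distrib sum_divide_distrib[symmetric] sum_distrib_left[symmetric] Int_def conj_commute)
qed

lemma card_off_diag_ge_neg_one: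
  assumes diag: "\<forall>i<n. x i i = r" and psd: "0 \<le> (\<Sum>i<n. \<Sum>j<n. x i j)"
    and energy: "sinh_energy n x \<le> K * real n ^ 2" and "0 < K" and large: "2 * (r + 1) < real n"
  shows "real n ^ 2 / (4 * (K + 1)) \<le> real (card {p\<in>off_diag n. -1 \<le> x (fst p) (snd p)})"
proof -
  let ?k = "real (card {p\<in>off_diag n. -1 \<le> x (fst p) (snd p)})"
  have "(\<Sum>p\<in>off_diag n. (x (fst p) (snd p))\<^sup>2) \<le> sinh_energy n x / 4"
    unfolding sinh_energy_def sum_divide_distrib
    by (intro sum_mono) (use sq_le_sinh_sq in \<open>simp add: power_mult_distrib\<close>)
  also have "\<dots> \<le> K * real n ^ 2 / 4" using energy by simp
  finally have "(\<Sum>p\<in>off_diag n. (x (fst p) (snd p))\<^sup>2) / (4 * K) \<le> real n ^ 2 / 16"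
    using \<open>0 < K\<close> by (simp add: field_simps)
  then have "- (real n * r) + (real n ^ 2 - real n) \<le> real n ^ 2 / 16 + (K + 1) * ?k"
    using sum_add_card_le_card_ge_neg_one[OF finite_off_diag[of n] \<open>0 < K\<close>, of "\<lambda>p. x (fst p) (snd p)"]
      sum_off_diag_ge[OF diag psd] card_off_diag[of n]
    by linarith
  moreover have "real n * r + real n \<le> real n ^ 2 / 2"
    using mult_left_mono[of "2 * (r + 1)" "real n" "real n"] large by (simp add: power2_eq_square algebra_simps)
  ultimately have "real n ^ 2 / 4 \<le> (K + 1) * ?k"
    using zero_le_power2[of "real n"] by linarith
  then show ?thesis
    using \<open>0 < K\<close> by (simp add: field_simps)
qed

lemma frob_err_le_imp_sum_sq_le:
  assumes "frob_err n A B \<le> e"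
  shows "(\<Sum>i<n. \<Sum>j<n. (A i j - B i j)\<^sup>2) \<le> e\<^sup>2"
proof -
  let ?S = "\<Sum>i<n. \<Sum>j<n. (A i j - B i j)\<^sup>2"
  have "0 \<le> ?S" by (intro sum_nonneg) simp
  moreover have "(sqrt ?S)\<^sup>2 \<le> e\<^sup>2"
    using assms unfolding frob_err_def by (rule power_mono) (simp add: \<open>0 \<le> ?S\<close>)
  ultimately show ?thesis by simp
qed

lemma frob_err_le_imp_entry_le:
  assumes "frob_err n A B \<le> e" "i < n" "j < n"
  shows "\<bar>A i j - B i j\<bar> \<le> e"
proof -
  have "(A i j - B i j)\<^sup>2 \<le> (\<Sum>j<n. (A i j - B i j)\<^sup>2)"
    using assms by (intro member_le_sum) auto
  also have "\<dots> \<le> (\<Sum>i<n. \<Sum>j<n. (A i j - B i j)\<^sup>2)"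
    using assms by (intro member_le_sum[where f = "\<lambda>i. \<Sum>j<n. (A i j - B i j)\<^sup>2"] sum_nonneg) auto
  finally have "sqrt ((A i j - B i j)\<^sup>2) \<le> frob_err n A B"
    unfolding frob_err_def by (rule real_sqrt_le_mono)
  then show ?thesis
    using assms(1) by simp
qed

lemma nnz_ge_if_exp_approx:
  assumes diag: "\<forall>i<n. x i i = r" and psd: "0 \<le> (\<Sum>i<n. \<Sum>j<n. x i j)"
    and energy: "sinh_energy n x \<le> K * real n ^ 2" and "0 < K" and large: "2 * (r + 1) < real n"
    and err: "frob_err n (\<lambda>i j. exp (x i j)) S \<le> sqrt (exp (- 2) / (8 * (K + 1))) * real n"
  shows "real n ^ 2 / (8 * (K + 1)) \<le> real (nnz n S)"
proof -
  define G where "G = {p\<in>off_diag n. -1 \<le> x (fst p) (snd p)}"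
  define Z where "Z = {p\<in>G. S (fst p) (snd p) = 0}"
  define NZ where "NZ = {(i, j). i < n \<and> j < n \<and> S i j \<noteq> 0}"
  define dev where "dev p = \<bar>exp (x (fst p) (snd p)) - S (fst p) (snd p)\<bar>" for p
  have "finite G" using finite_off_diag by (simp add: G_def)
  have G_sub: "G \<subseteq> {..<n} \<times> {..<n}" using off_diag_subset by (auto simp: G_def)
  \<comment> \<open>On \<open>Z\<close> an entry \<open>\<ge> exp (-1)\<close> is approximated by \<open>0\<close>.\<close>
  have "Z \<subseteq> {p\<in>{..<n} \<times> {..<n}. 0 + exp (- 1) \<le> dev p}"
    using G_sub by (auto simp: Z_def G_def dev_def)
  then have "real (card Z) * (exp (- 1))\<^sup>2 \<le> real (card {p\<in>{..<n} \<times> {..<n}. 0 + exp (- 1) \<le> dev p}) * (exp (- 1))\<^sup>2"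
    by (intro mult_right_mono) (simp_all add: card_mono)
  also have "\<dots> \<le> (\<Sum>p\<in>{..<n} \<times> {..<n}. (dev p - 0)\<^sup>2)"
    by (intro chebyshev_count) simp_all
  also have "\<dots> \<le> (sqrt (exp (- 2) / (8 * (K + 1))) * real n)\<^sup>2"
    using frob_err_le_imp_sum_sq_le[OF err] by (simp add: dev_def sum.cartesian_product split_def)
  finally have "(K + 1) * real (card Z) * exp (- 2) \<le> real n ^ 2 / 8 * exp (- 2)"
    using \<open>0 < K\<close> by (simp add: power_mult_distrib field_simps flip: exp_of_nat_mult)
  then have "(K + 1) * real (card Z) \<le> real n ^ 2 / 8"
    by (rule mult_right_le_imp_le) simp
  moreover have "card G \<le> card Z + nnz n S"
  proof -
    have "finite NZ" by (rule finite_subset[of _ "{..<n} \<times> {..<n}"]) (auto simp: NZ_def)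
    moreover have "G \<subseteq> Z \<union> NZ" using G_sub by (auto simp: Z_def NZ_def)
    ultimately have "card G \<le> card (Z \<union> NZ)"
      using \<open>finite G\<close> by (intro card_mono) (auto simp: Z_def)
    also have "\<dots> \<le> card Z + card NZ" by (rule card_Un_le)
    finally show ?thesis by (simp add: nnz_def NZ_def)
  qed
  then have "(K + 1) * real (card G) \<le> (K + 1) * real (card Z) + (K + 1) * real (nnz n S)"
    using mult_left_mono[of "real (card G)" "real (card Z) + real (nnz n S)" "K + 1"] \<open>0 < K\<close>
    by (simp add: distrib_left)
  moreover have "real n ^ 2 / 4 \<le> (K + 1) * real (card G)"
    using card_off_diag_ge_neg_one[OF diag psd energy \<open>0 < K\<close> large] \<open>0 < K\<close>
    by (simp add: G_def field_simps)
  ultimately have "real n ^ 2 / 8 \<le> (K + 1) * real (nnz n S)"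
    by linarith
  then show ?thesis
    using \<open>0 < K\<close> by (simp add: field_simps)
qed

lemma exp_off_diag_le_if_sinh_energy_le:
  assumes "(i, j) \<in> off_diag n" "sinh_energy n x \<le> K * real n ^ 2" "0 \<le> K" "1 \<le> real n"
  shows "exp (x i j) \<le> sqrt (K + 2) * real n"
proof -
  have "(2 * sinh (x (fst (i, j)) (snd (i, j))))\<^sup>2 \<le> sinh_energy n x"
    unfolding sinh_energy_def using assms(1) by (intro member_le_sum) (simp_all add: finite_off_diag)
  then have "exp (2 * x i j) + exp (- (2 * x i j)) - 2 \<le> K * real n ^ 2"
    using assms(2) by (simp only: fst_conv snd_conv sinh_sq_eq_exp)
  moreover have "0 < exp (- (2 * x i j))" "K * real n ^ 2 + 2 \<le> (K + 2) * real n ^ 2"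
    using assms(4) by (simp_all add: algebra_simps)
  ultimately have "exp (2 * x i j) \<le> (K + 2) * real n ^ 2"
    by linarith
  then have "(exp (x i j))\<^sup>2 \<le> (sqrt (K + 2) * real n)\<^sup>2"
    using assms(3) by (simp add: power_mult_distrib flip: exp_double)
  then show ?thesis
    by (rule power2_le_imp_le) (use assms(3) in simp)
qed

lemma mat_rank_ge_if_exp_approx:
  assumes diag: "\<forall>i<n. x i i = r" and diag_large: "real n ^ 3 \<le> exp r"
    and energy: "sinh_energy n x \<le> K * real n ^ 2" and "0 \<le> K" and "0 \<le> c"
    and large: "sqrt (K + 2) + 2 * c + 1 \<le> real n"
    and err: "frob_err n (\<lambda>i j. exp (x i j)) R \<le> c * real n"
  shows "n \<le> mat_rank n R"
proof (rule mat_rank_ge_if_diagonally_dominant, intro allI impI)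
  fix i assume "i < n"
  define L where "L = sqrt (K + 2)"
  have "0 \<le> L" using \<open>0 \<le> K\<close> by (simp add: L_def)
  then have "1 \<le> real n" using \<open>0 \<le> c\<close> large unfolding L_def by linarith
  have close: "exp (x k l) - c * real n \<le> R k l" "R k l \<le> exp (x k l) + c * real n"
    if "k < n" "l < n" for k l
    using frob_err_le_imp_entry_le[OF err that] by (simp_all add: abs_le_iff)
  have off_diag_entry: "\<bar>R i j\<bar> \<le> (L + c) * real n" if "j \<in> {..<n} - {i}" for j
  proof -
    have "j < n" "(i, j) \<in> off_diag n" using that \<open>i < n\<close> by (auto simp: off_diag_def)
    then have "exp (x i j) \<le> L * real n"
      unfolding L_def using exp_off_diag_le_if_sinh_energy_le energy \<open>0 \<le> K\<close> \<open>1 \<le> real n\<close> by blast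
    moreover have "0 < exp (x i j)" "0 \<le> L * real n" using \<open>0 \<le> L\<close> \<open>1 \<le> real n\<close> by simp_all
    ultimately show ?thesis
      using close[OF \<open>i < n\<close> \<open>j < n\<close>] unfolding abs_le_iff distrib_right by (intro conjI; linarith)
  qed
  have "(\<Sum>j\<in>{..<n} - {i}. \<bar>R i j\<bar>) \<le> real (card ({..<n} - {i})) * ((L + c) * real n)"
    using off_diag_entry by (rule sum_bounded_above)
  also have "\<dots> \<le> real n * ((L + c) * real n)"
    using \<open>0 \<le> L\<close> \<open>0 \<le> c\<close> \<open>i < n\<close> by (intro mult_right_mono) simp_all
  also have "\<dots> < real n ^ 3 - c * real n"
  proof -
    have "(L + c) * real n \<le> (real n - c - 1) * real n"
      using large \<open>1 \<le> real n\<close> unfolding L_def by (intro mult_right_mono) simp_all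
    moreover have "c \<le> c * real n"
      using mult_left_mono[OF \<open>1 \<le> real n\<close> \<open>0 \<le> c\<close>] by simp
    ultimately have "(L + c) * real n + c < real n * real n"
      using \<open>1 \<le> real n\<close> by (simp add: left_diff_distrib)
    then have "real n * ((L + c) * real n + c) < real n * (real n * real n)"
      using \<open>1 \<le> real n\<close> by (intro mult_strict_left_mono) simp_all
    then show ?thesis by (simp add: power3_eq_cube algebra_simps)
  qed
  also have "\<dots> \<le> \<bar>R i i\<bar>"
    using close(1)[OF \<open>i < n\<close> \<open>i < n\<close>] diag \<open>i < n\<close> diag_large by simp
  finally show "(\<Sum>j\<in>{..<n} - {i}. \<bar>R i j\<bar>) < \<bar>R i i\<bar>" .
qed

lemma sparse_plus_rank_one_approx:
  assumes "sinh_energy n x \<le> K * real n ^ 2" "0 \<le> K"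
  shows "\<exists>S R. real (nnz n S + lowrank_params n R) \<le> 2 * real n \<and>
    frob_err n (\<lambda>i j. exp (x i j)) (\<lambda>i j. S i j + R i j) \<le> sqrt K * real n"
proof -
  define S where "S i j = (if i = j then exp (x i j) - 1 else 0)" for i j
  define R :: "nat \<Rightarrow> nat \<Rightarrow> real" where "R i j = 1 * 1" for i j
  have "nnz n S \<le> card ((\<lambda>i. (i, i)) ` {..<n})"
    unfolding nnz_def S_def by (intro card_mono) auto
  also have "\<dots> \<le> n" using card_image_le[of "{..<n}" "\<lambda>i. (i, i)"] by simp
  finally have "nnz n S \<le> n" .
  moreover have "lowrank_params n R \<le> n"
    using mat_rank_outer_product_le_1[of n "\<lambda>_. 1" "\<lambda>_. 1"] unfolding lowrank_params_def R_def by simp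
  moreover have "frob_err n (\<lambda>i j. exp (x i j)) (\<lambda>i j. S i j + R i j) \<le> sqrt K * real n"
  proof -
    have "(\<Sum>i<n. \<Sum>j<n. (exp (x i j) - (S i j + R i j))\<^sup>2) =
      (\<Sum>p\<in>off_diag n. (exp (x (fst p) (snd p)) - 1)\<^sup>2)"
      using sum_square_split_diag[of "\<lambda>i j. (exp (x i j) - (S i j + R i j))\<^sup>2" n]
      by (auto simp: S_def R_def mem_off_diag_iff intro!: sum.cong)
    also have "\<dots> \<le> sinh_energy n x"
      unfolding sinh_energy_def by (intro sum_mono exp_minus_one_sq_le_sinh_sq)
    also have "\<dots> \<le> K * real n ^ 2"
      by (rule assms(1))
    finally have "frob_err n (\<lambda>i j. exp (x i j)) (\<lambda>i j. S i j + R i j) \<le> sqrt (K * real n ^ 2)"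
      unfolding frob_err_def by (rule real_sqrt_le_mono)
    then show ?thesis
      using assms(2) by (simp add: real_sqrt_mult)
  qed
  ultimately show ?thesis by (intro exI[of _ S] exI[of _ R]) simp
qed

section \<open>The random kernel matrix\<close>

text \<open>Mean plus Chebyshev deviation of the energy, in units of \<open>n\<^sup>2\<close>, when \<open>a\<^sup>2 d \<le> \<kappa>\<close>.\<close>

definition energy_bound :: "real \<Rightarrow> real" where
  "energy_bound \<kappa> = 2 * exp (4 * \<kappa>) + 2 * sqrt (2 * exp (16 * \<kappa>) + 2)"

lemma card_sign_mats_sinh_energy_gt:
  assumes "0 \<le> a" "4 * a \<le> 1" "a\<^sup>2 * real d \<le> \<kappa>" "energy_bound \<kappa> \<le> K" "0 < n"
  shows "real (card {s\<in>sign_mats n d. \<not> sinh_energy n (\<lambda>i j. a * row_inner d s i j) \<le> K * real n ^ 2})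
    \<le> real (card (sign_mats n d)) / real n"
proof -
  define T where "T = 2 * sqrt (2 * exp (16 * \<kappa>) + 2)"
  have "cosh (4 * a) ^ d \<le> exp ((4 * a)\<^sup>2 * real d)"
    using assms(1,2) by (intro cosh_power_le_exp) simp
  also have "\<dots> \<le> exp (16 * \<kappa>)"
    using assms(3) by (simp add: power_mult_distrib)
  finally have tail: "real (card {s\<in>sign_mats n d. (2 * cosh (2 * a) ^ d - 2) * real (card (off_diag n)) + T * real n ^ 2
      \<le> sinh_energy n (\<lambda>i j. a * row_inner d s i j)}) \<le> real (card (sign_mats n d)) / real n"
    using \<open>0 < n\<close> by (intro card_sign_mats_sinh_energy_large) (simp_all add: T_def power_mult_distrib add_pos_nonneg)
  have "cosh (2 * a) ^ d \<le> exp ((2 * a)\<^sup>2 * real d)"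
    using assms(1,2) by (intro cosh_power_le_exp) simp
  also have "\<dots> \<le> exp (4 * \<kappa>)"
    using assms(3) by (simp add: power_mult_distrib)
  finally have "(2 * cosh (2 * a) ^ d - 2) * real (card (off_diag n)) \<le> 2 * exp (4 * \<kappa>) * real n ^ 2"
    using card_off_diag_le[of n] cosh_real_ge_1[of "2 * a"]
    by (intro mult_mono) (simp_all add: one_le_power)
  moreover have "energy_bound \<kappa> * real n ^ 2 \<le> K * real n ^ 2"
    using assms(4) by (simp add: mult_right_mono)
  ultimately have "card {s\<in>sign_mats n d. \<not> sinh_energy n (\<lambda>i j. a * row_inner d s i j) \<le> K * real n ^ 2}
    \<le> card {s\<in>sign_mats n d. (2 * cosh (2 * a) ^ d - 2) * real (card (off_diag n)) + T * real n ^ 2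
      \<le> sinh_energy n (\<lambda>i j. a * row_inner d s i j)}"
    using finite_sign_mats by (intro card_mono) (auto simp: energy_bound_def T_def algebra_simps)
  with tail show ?thesis by linarith
qed

lemma kernel_M_eq_exp_row_inner:
  "0 \<le> r \<Longrightarrow> kernel_M d r s i j = exp (r / real d * row_inner d s i j)"
  unfolding kernel_M_def rand_Q_def row_inner_def
  by (simp add: sum_distrib_left mult_ac flip: real_sqrt_mult)

definition sparse_lowrank_hard :: "nat \<Rightarrow> (nat \<Rightarrow> nat \<Rightarrow> real) \<Rightarrow> real \<Rightarrow> real \<Rightarrow> bool" where
  "sparse_lowrank_hard n M c c' \<longleftrightarrow>
    (\<forall>S. frob_err n M S \<le> c * real n \<longrightarrow> real (nnz n S) \<ge> c' * (real n)\<^sup>2) \<and>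
    (\<forall>R. frob_err n M R \<le> c * real n \<longrightarrow> real (lowrank_params n R) \<ge> c' * (real n)\<^sup>2)"

definition sparse_plus_lowrank_approx :: "nat \<Rightarrow> (nat \<Rightarrow> nat \<Rightarrow> real) \<Rightarrow> real \<Rightarrow> real \<Rightarrow> bool" where
  "sparse_plus_lowrank_approx n M C C' \<longleftrightarrow>
    (\<exists>S R. real (nnz n S + lowrank_params n R) \<le> C * real n \<and>
      frob_err n M (\<lambda>i j. S i j + R i j) \<le> C' * real n)"

lemma sparse_lowrank_hard_exp:
  assumes diag: "\<forall>i<n. x i i = r" and psd: "0 \<le> (\<Sum>i<n. \<Sum>j<n. x i j)" and diag_large: "real n ^ 3 \<le> exp r"
    and energy: "sinh_energy n x \<le> K * real n ^ 2" and "0 < K" and large: "2 * (r + 1) < real n"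
    and large': "sqrt (K + 2) + 2 * sqrt (exp (- 2) / (8 * (K + 1))) + 1 \<le> real n"
  shows "sparse_lowrank_hard n (\<lambda>i j. exp (x i j)) (sqrt (exp (- 2) / (8 * (K + 1)))) (1 / (8 * (K + 1)))"
  unfolding sparse_lowrank_hard_def
proof (intro conjI allI impI)
  fix S assume "frob_err n (\<lambda>i j. exp (x i j)) S \<le> sqrt (exp (- 2) / (8 * (K + 1))) * real n"
  from nnz_ge_if_exp_approx[OF diag psd energy \<open>0 < K\<close> large this]
  show "1 / (8 * (K + 1)) * (real n)\<^sup>2 \<le> real (nnz n S)" by simp
next
  fix R assume "frob_err n (\<lambda>i j. exp (x i j)) R \<le> sqrt (exp (- 2) / (8 * (K + 1))) * real n"
  from mat_rank_ge_if_exp_approx[OF diag diag_large energy _ _ large' this] \<open>0 < K\<close>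
  have "real n * real n \<le> real (lowrank_params n R)"
    by (simp add: lowrank_params_def mult_left_mono)
  moreover have "1 / (8 * (K + 1)) * (real n)\<^sup>2 \<le> real n * real n"
    using \<open>0 < K\<close> by (simp add: power2_eq_square field_simps)
  ultimately show "1 / (8 * (K + 1)) * (real n)\<^sup>2 \<le> real (lowrank_params n R)" by linarith
qed

lemma kernel_scaling_bounds:
  assumes "0 < \<epsilon>" "\<epsilon> \<le> 1" "3 \<le> n" and r: "3 * ln (real n) \<le> r" "r \<le> A * ln (real n)"
    and d: "6 / \<epsilon>\<^sup>2 * r * ln (real n) \<le> real d"
  shows "0 < real d" "0 \<le> r" "real n ^ 3 \<le> exp r" "4 * (r / real d) \<le> 1" "(r / real d)\<^sup>2 * real d \<le> A / 6"
proof -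
  have "1 \<le> ln (real n)"
    using \<open>3 \<le> n\<close> exp_le by (simp add: ln_ge_iff)
  then have "0 < r" using r by linarith
  have d_pos: "0 < 6 / \<epsilon>\<^sup>2 * r * ln (real n)"
    using \<open>0 < r\<close> \<open>0 < \<epsilon>\<close> \<open>1 \<le> ln (real n)\<close> by simp
  with d have "0 < real d" by simp
  then show "0 < real d" "0 \<le> r" using \<open>0 < r\<close> by simp_all
  have "real n ^ 3 = exp (3 * ln (real n))"
    using \<open>3 \<le> n\<close> exp_of_nat_mult[of 3 "ln (real n)"] by simp
  then show "real n ^ 3 \<le> exp r" using r by simp
  have a_le: "r / real d \<le> \<epsilon>\<^sup>2 / (6 * ln (real n))"
    using divide_left_mono[OF d _ mult_pos_pos[OF \<open>0 < real d\<close> d_pos], where c = r] \<open>0 < r\<close> by simp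
  have "\<epsilon>\<^sup>2 \<le> 1" using \<open>0 < \<epsilon>\<close> \<open>\<epsilon> \<le> 1\<close> by (simp add: power_le_one)
  then have "\<epsilon>\<^sup>2 / (6 * ln (real n)) \<le> 1 / 6"
    using \<open>1 \<le> ln (real n)\<close> by (simp add: field_simps)
  with a_le show "4 * (r / real d) \<le> 1" by simp
  have "(r / real d)\<^sup>2 * real d = r * (r / real d)"
    using \<open>0 < real d\<close> by (simp add: power2_eq_square)
  also have "\<dots> \<le> A * ln (real n) * (1 / (6 * ln (real n)))"
    using r a_le \<open>1 \<le> ln (real n)\<close> \<open>\<epsilon>\<^sup>2 \<le> 1\<close> \<open>0 < r\<close>
    by (intro mult_mono order_trans[OF a_le]) (simp_all add: field_simps)
  finally show "(r / real d)\<^sup>2 * real d \<le> A / 6"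
    using \<open>1 \<le> ln (real n)\<close> by simp
qed

lemma measure_pmf_of_set_ge:
  assumes "finite \<Omega>" "\<Omega> \<noteq> {}" and good: "\<And>s. s \<in> \<Omega> \<Longrightarrow> Q s \<Longrightarrow> s \<in> X"
    and bad: "real (card {s\<in>\<Omega>. \<not> Q s}) \<le> \<delta> * real (card \<Omega>)"
  shows "1 - \<delta> \<le> measure_pmf.prob (pmf_of_set \<Omega>) X"
proof -
  have "card {s\<in>\<Omega>. Q s} \<le> card (\<Omega> \<inter> X)"
    using good assms(1) by (intro card_mono) auto
  moreover have "card {s\<in>\<Omega>. Q s} + card {s\<in>\<Omega>. \<not> Q s} = card \<Omega>"
    using assms(1) by (subst card_Un_disjoint[symmetric]) (auto intro: arg_cong[where f = card])
  moreover have "0 < real (card \<Omega>)"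
    using assms(1,2) by (simp add: card_gt_0_iff)
  ultimately show ?thesis
    using bad assms(1,2) by (simp add: measure_pmf_of_set field_simps)
qed

lemma kernel_M_whp:
  assumes "0 < \<epsilon>" "\<epsilon> \<le> 1" "3 \<le> n" "3 * ln (real n) \<le> r" "r \<le> A * ln (real n)"
    and "6 / \<epsilon>\<^sup>2 * r * ln (real n) \<le> real d" and K: "energy_bound (A / 6) \<le> K"
    and large: "2 * (r + 1) < real n" "sqrt (K + 2) + 2 * sqrt (exp (- 2) / (8 * (K + 1))) + 1 \<le> real n"
  shows "1 - 1 / real n \<le> measure_pmf.prob (sign_pmf n d)
      {s. sparse_lowrank_hard n (kernel_M d r s) (sqrt (exp (- 2) / (8 * (K + 1)))) (1 / (8 * (K + 1)))}"
    and "1 - 1 / real n \<le> measure_pmf.prob (sign_pmf n d) {s. sparse_plus_lowrank_approx n (kernel_M d r s) 2 (sqrt K)}"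
proof -
  note bounds = kernel_scaling_bounds[OF assms(1-6)]
  define x where "x s = (\<lambda>i j. r / real d * row_inner d s i j)" for s
  have "0 < K"
    using K by (smt (verit, best) energy_bound_def exp_gt_zero real_sqrt_ge_zero)
  have bad: "real (card {s\<in>sign_mats n d. \<not> sinh_energy n (x s) \<le> K * real n ^ 2})
      \<le> 1 / real n * real (card (sign_mats n d))"
    using card_sign_mats_sinh_energy_gt[OF _ _ bounds(5) K] bounds \<open>3 \<le> n\<close> by (simp add: x_def)
  have kernel: "kernel_M d r s = (\<lambda>i j. exp (x s i j))" for s
    using bounds(2) by (simp add: fun_eq_iff x_def kernel_M_eq_exp_row_inner)
  have diag: "\<forall>i<n. x s i i = r" if "s \<in> sign_mats n d" for s
    using row_inner_self[OF that] bounds(1) by (simp add: x_def)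
  have psd: "0 \<le> (\<Sum>i<n. \<Sum>j<n. x s i j)" for s
  proof -
    have "(\<Sum>i<n. \<Sum>j<n. x s i j) = r / real d * (\<Sum>i<n. \<Sum>j<n. row_inner d s i j)"
      by (simp add: x_def sum_distrib_left)
    then show ?thesis
      using sum_row_inner_nonneg[where n = n and d = d and s = s] bounds(1,2) by simp
  qed
  show "1 - 1 / real n \<le> measure_pmf.prob (sign_pmf n d)
      {s. sparse_lowrank_hard n (kernel_M d r s) (sqrt (exp (- 2) / (8 * (K + 1)))) (1 / (8 * (K + 1)))}"
    unfolding sign_pmf_def
    using sparse_lowrank_hard_exp[OF diag psd bounds(3) _ \<open>0 < K\<close> large] kernel
    by (intro measure_pmf_of_set_ge[OF finite_sign_mats sign_mats_nonempty _ bad]) simp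
  show "1 - 1 / real n \<le> measure_pmf.prob (sign_pmf n d) {s. sparse_plus_lowrank_approx n (kernel_M d r s) 2 (sqrt K)}"
    unfolding sign_pmf_def
    using sparse_plus_rank_one_approx[where K = K] \<open>0 < K\<close> kernel
    by (intro measure_pmf_of_set_ge[OF finite_sign_mats sign_mats_nonempty _ bad])
       (simp add: sparse_plus_lowrank_approx_def)
qed

lemma eventually_kernel_M_whp:
  assumes "0 < \<epsilon>" "\<epsilon> \<le> 1"
    and r: "\<forall>\<^sub>F n in sequentially. 3 * ln (real n) \<le> r n \<and> r n \<le> A * ln (real n)"
    and d: "\<forall>\<^sub>F n in sequentially. 6 / \<epsilon>\<^sup>2 * r n * ln (real n) \<le> real (d n)"
  shows "\<exists>c>0. \<exists>c'>0. \<forall>\<^sub>F n in sequentially. 1 - 1 / real n \<le>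
      measure_pmf.prob (sign_pmf n (d n)) {s. sparse_lowrank_hard n (kernel_M (d n) (r n) s) c c'}"
    and "\<exists>C>0. \<exists>C'>0. \<forall>\<^sub>F n in sequentially. 1 - 1 / real n \<le>
      measure_pmf.prob (sign_pmf n (d n)) {s. sparse_plus_lowrank_approx n (kernel_M (d n) (r n) s) C C'}"
proof -
  define K where "K = energy_bound (A / 6)"
  define c where "c = sqrt (exp (- 2) / (8 * (K + 1)))"
  have "0 < K" unfolding K_def energy_bound_def by (simp add: add_pos_nonneg)
  have "\<forall>\<^sub>F n in sequentially. 2 * (A * ln (real n) + 1) < real n"
    by real_asymp
  moreover have "\<forall>\<^sub>F n in sequentially. sqrt (K + 2) + 2 * c + 1 \<le> real n"
    using filterlim_real_sequentially unfolding filterlim_at_top by blast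
  ultimately have large: "\<forall>\<^sub>F n in sequentially. 3 \<le> n \<and> 3 * ln (real n) \<le> r n \<and> r n \<le> A * ln (real n) \<and>
      6 / \<epsilon>\<^sup>2 * r n * ln (real n) \<le> real (d n) \<and> 2 * (r n + 1) < real n \<and> sqrt (K + 2) + 2 * c + 1 \<le> real n"
    using r d eventually_ge_at_top[of "3::nat"] by eventually_elim auto
  note whp = kernel_M_whp[where A = A, OF \<open>0 < \<epsilon>\<close> \<open>\<epsilon> \<le> 1\<close> _ _ _ _ order_refl, folded K_def, folded c_def]
  have "\<forall>\<^sub>F n in sequentially. 1 - 1 / real n \<le>
      measure_pmf.prob (sign_pmf n (d n)) {s. sparse_lowrank_hard n (kernel_M (d n) (r n) s) c (1 / (8 * (K + 1)))}"
    using large by eventually_elim (intro whp(1); simp)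
  moreover have "0 < c" "0 < 1 / (8 * (K + 1))" using \<open>0 < K\<close> by (simp_all add: c_def)
  ultimately show "\<exists>c>0. \<exists>c'>0. \<forall>\<^sub>F n in sequentially. 1 - 1 / real n \<le>
      measure_pmf.prob (sign_pmf n (d n)) {s. sparse_lowrank_hard n (kernel_M (d n) (r n) s) c c'}"
    by blast
  have "\<forall>\<^sub>F n in sequentially. 1 - 1 / real n \<le>
      measure_pmf.prob (sign_pmf n (d n)) {s. sparse_plus_lowrank_approx n (kernel_M (d n) (r n) s) 2 (sqrt K)}"
    using large by eventually_elim (intro whp(2); simp)
  moreover have "(0::real) < 2" "0 < sqrt K" using \<open>0 < K\<close> by simp_all
  ultimately show "\<exists>C>0. \<exists>C'>0. \<forall>\<^sub>F n in sequentially. 1 - 1 / real n \<le>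
      measure_pmf.prob (sign_pmf n (d n)) {s. sparse_plus_lowrank_approx n (kernel_M (d n) (r n) s) C C'}"
    by blast
qed

theorem mainTheorem2:
  shows "\<exists>a0>0. \<exists>\<epsilon>0>0. \<epsilon>0 \<le> 1 \<and>
    (\<forall>\<epsilon>::real. 0 < \<epsilon> \<and> \<epsilon> \<le> \<epsilon>0 \<longrightarrow>
      (\<forall>(A::real) (B::real) (r::nat \<Rightarrow> real) (d::nat \<Rightarrow> nat).
        (\<forall>\<^sub>F n in sequentially. a0 * ln (real n) \<le> r n \<and> r n \<le> A * ln (real n)) \<and>
        (\<forall>\<^sub>F n in sequentially. 6 / \<epsilon>^2 * r n * ln (real n) \<le> real (d n) \<and>
                                 real (d n) \<le> B / \<epsilon>^2 * r n * ln (real n))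
        \<longrightarrow>
        (\<exists>c>0. \<exists>c'>0. \<forall>\<^sub>F n in sequentially.
           measure_pmf.prob (sign_pmf n (d n))
             {s. (\<forall>S. frob_err n (kernel_M (d n) (r n) s) S \<le> c * real n
                        \<longrightarrow> real (nnz n S) \<ge> c' * (real n)^2) \<and>
                 (\<forall>R. frob_err n (kernel_M (d n) (r n) s) R \<le> c * real n
                        \<longrightarrow> real (lowrank_params n R) \<ge> c' * (real n)^2)}
           \<ge> 1 - 1 / real n) \<and>
        (\<exists>C>0. \<exists>C'>0. \<forall>\<^sub>F n in sequentially.
           measure_pmf.prob (sign_pmf n (d n))
             {s. \<exists>S R. real (nnz n S + lowrank_params n R) \<le> C * real n \<and>
                        frob_err n (kernel_M (d n) (r n) s) (\<lambda>i j. S i j + R i j) \<le> C' * real n}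
           \<ge> 1 - 1 / real n)))"
proof (rule exI[of _ "3::real"], rule conjI, simp, rule exI[of _ "1::real"], intro conjI allI impI, goal_cases)
  case (3 \<epsilon> A B r d)
  have d: "\<forall>\<^sub>F n in sequentially. 6 / \<epsilon>\<^sup>2 * r n * ln (real n) \<le> real (d n)"
    using conjunct2[OF 3(2)] by (rule eventually_mono) simp
  from 3(1) show ?case
    by (intro eventually_kernel_M_whp(1)[OF _ _ conjunct1[OF 3(2)] d, unfolded sparse_lowrank_hard_def]) simp_all
next
  case (4 \<epsilon> A B r d)
  have d: "\<forall>\<^sub>F n in sequentially. 6 / \<epsilon>\<^sup>2 * r n * ln (real n) \<le> real (d n)"
    using conjunct2[OF 4(2)] by (rule eventually_mono) simp
  from 4(1) show ?case
    by (intro eventually_kernel_M_whp(2)[OF _ _ conjunct1[OF 4(2)] d, unfolded sparse_plus_lowrank_approx_def]) simp_all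
qed simp_all

end
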